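(* Fix $q\in(1/2,1)$, integers $K\ge1$, $1\le C\le K/2$, and $\lambda\in[0,1]$. Let $\sigma$ be a state-symmetric strategy with $\sigma(1,k)(C)=1$ for every $k\ge K/2$. Then $\phi_\sigma$ has no fixed point $x\in[0,1]$ satisfying both $\lambda x+(1-\lambda)q>1/2$ and $x\le q$.
   Context: A strategy is a map $\sigma:\{-1,1\}\times\{0,\dots,K\}\to\Delta(\{0,\dots,C\})$, where $\sigma(s,k)$ is the distribution of the number of positive stories (out of $C$ shared) shared by an agent with own story $s$ who sees $k$ positive stories among $K$ in their news feed; feasibility requires $\sigma(s,k)$ to be supported in $[\max(0,C+k-K),\min(k,C)]$. $\mathbb{E}[\sigma(s,k)]$ denotes the mean of $\sigma(s,k)$. $\sigma$ is state symmetric if $\sigma(s,k)(z)=\sigma(-s,K-k)(C-z)$ for all $s,k,z$. The inflow accuracy function of $\sigma$ is $\phi_\sigma(x)=\frac{q+\sum_{k=0}^K P_k(x,\lambda)[q\,\mathbb{E}[\sigma(1,k)]+(1-q)\mathbb{E}[\sigma(-1,k)]]}{1+C}$ with $P_k(x,\lambda)=\mathbb{P}[\mathrm{Binom}(K,\lambda x+(1-\lambda)q)=k]$. *)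

theory Defs
  imports Complex_Main
begin

text \<open>A (mixed) strategy is represented as a function
  sigma s k z = probability that an agent with own story s (in {-1,1}) who sees
  k (in {0..K}) positive stories shares z (in {0..C}) positive stories.
  Values outside these ranges are irrelevant.\<close>

definition strategy :: "nat \<Rightarrow> nat \<Rightarrow> (int \<Rightarrow> nat \<Rightarrow> nat \<Rightarrow> real) \<Rightarrow> bool" where
  "strategy K C sigma \<longleftrightarrow>
     (\<forall>s\<in>{-1,1}. \<forall>k\<in>{0..K}.
        (\<forall>z\<in>{0..C}. sigma s k z \<ge> 0) \<and>
        (\<Sum>z\<in>{0..C}. sigma s k z) = 1 \<and>
        (\<forall>z\<in>{0..C}. sigma s k z \<noteq> 0 \<longrightarrow> max 0 (int C + int k - int K) \<le> int z \<and> z \<le> min k C))"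

definition mean_share :: "nat \<Rightarrow> (int \<Rightarrow> nat \<Rightarrow> nat \<Rightarrow> real) \<Rightarrow> int \<Rightarrow> nat \<Rightarrow> real" where
  "mean_share C sigma s k = (\<Sum>z\<in>{0..C}. real z * sigma s k z)"

definition state_symmetric :: "nat \<Rightarrow> nat \<Rightarrow> (int \<Rightarrow> nat \<Rightarrow> nat \<Rightarrow> real) \<Rightarrow> bool" where
  "state_symmetric K C sigma \<longleftrightarrow>
     (\<forall>s\<in>{-1,1}. \<forall>k\<in>{0..K}. \<forall>z\<in>{0..C}. sigma s k z = sigma (-s) (K - k) (C - z))"

definition binom_prob :: "nat \<Rightarrow> nat \<Rightarrow> real \<Rightarrow> real" where
  "binom_prob K k p = real (K choose k) * p ^ k * (1 - p) ^ (K - k)"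

definition inflow_accuracy ::
  "nat \<Rightarrow> nat \<Rightarrow> real \<Rightarrow> real \<Rightarrow> (int \<Rightarrow> nat \<Rightarrow> nat \<Rightarrow> real) \<Rightarrow> real \<Rightarrow> real" where
  "inflow_accuracy K C q lambda sigma x =
     (q + (\<Sum>k\<in>{0..K}. binom_prob K k (lambda * x + (1 - lambda) * q) *
            (q * mean_share C sigma 1 k + (1 - q) * mean_share C sigma (-1) k))) / (1 + real C)"

end

theory Submission imports Defs begin

(* Write a k for the mean number of positive stories shared by an agent with a positive story
   who sees k of them, and P k for the binomial weights at p = lambda x + (1 - lambda) q.
   State symmetry turns the fixed point equation into
     (1 + C) x = q + C q + sum_k (C - a k) ((1 - q) P (K - k) - q P k),
   where C - a k vanishes for 2 k >= K. For 2 k < K and r <= p the binomial odds give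
   r P k <= (1 - r) P (K - k), strictly at k = 0. Taking r = x (note x <= p because x <= q)
   and paying (q - x) (P k + P (K - k)) per term to replace x by q, the sum exceeds C (x - q).
   Hence (1 + C) x > q + C x, contradicting x <= q. *)

lemma binom_prob_nonneg: "0 \<le> p \<Longrightarrow> p \<le> 1 \<Longrightarrow> 0 \<le> binom_prob K k (p::real)"
  by (simp add: binom_prob_def)

lemma sum_binom_prob: "(\<Sum>k\<in>{0..K}. binom_prob K k (p::real)) = 1"
  using binomial_ring[of p "1 - p" K] by (simp add: binom_prob_def atLeast0AtMost)

lemma sum_reflect:
  fixes f :: "nat \<Rightarrow> 'a::comm_monoid_add"
  shows "(\<Sum>k\<in>{0..K}. f (K - k)) = (\<Sum>k\<in>{0..K}. f k)"
  using sum.atLeastAtMost_rev[of f 0 K] by simp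

lemma weighted_pow_le:
  fixes p r :: real
  assumes "0 \<le> r" "r \<le> p" "p \<le> 1" "1/2 < p" "n \<ge> 1"
  shows "r * (1 - p) ^ n \<le> (1 - r) * p ^ n"
proof -
  obtain m where n: "n = Suc m" using assms(5) by (cases n) auto
  have "r * (1 - p) \<le> (1 - r) * p" using assms by (simp add: algebra_simps)
  moreover have "(1 - p) ^ m \<le> p ^ m" using assms by (intro power_mono) auto
  ultimately have "(1 - p) ^ m * (r * (1 - p)) \<le> p ^ m * ((1 - r) * p)"
    using assms by (auto intro!: mult_mono[of "(1 - p) ^ m"])
  then show ?thesis by (simp add: n algebra_simps)
qed

lemma weighted_pow_less:
  fixes p r :: real
  assumes "0 \<le> r" "r \<le> p" "p \<le> 1" "1/2 < p" "n \<ge> 2" "r < 1"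
  shows "r * (1 - p) ^ n < (1 - r) * p ^ n"
proof -
  obtain m where n: "n = Suc m" and m: "m \<ge> 1" using assms(5) by (cases n) auto
  have "(1 - p) ^ m * (r * (1 - p)) \<le> (1 - p) ^ m * ((1 - r) * p)"
    using assms by (intro mult_left_mono) (auto simp: algebra_simps)
  also have "\<dots> < p ^ m * ((1 - r) * p)"
    using assms m by (intro mult_strict_right_mono power_strict_mono) auto
  finally show ?thesis by (simp add: n algebra_simps)
qed

lemma binom_prob_mirror_le:
  fixes p r :: real
  assumes "0 \<le> r" "r \<le> p" "p \<le> 1" "1/2 < p" "2 * j < K"
  shows "r * binom_prob K j p \<le> (1 - r) * binom_prob K (K - j) p"
proof -
  have K: "K - j = j + (K - 2 * j)" "K - (K - j) = j" using assms(5) by auto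
  have choose: "K choose (K - j) = K choose j"
    using assms(5) by (intro binomial_symmetric[symmetric]) simp
  have "r * (1 - p) ^ (K - 2 * j) \<le> (1 - r) * p ^ (K - 2 * j)"
    using assms by (intro weighted_pow_le) auto
  then have "(K choose j) * (p ^ j * (1 - p) ^ j) * (r * (1 - p) ^ (K - 2 * j))
      \<le> (K choose j) * (p ^ j * (1 - p) ^ j) * ((1 - r) * p ^ (K - 2 * j))"
    using assms by (intro mult_left_mono) auto
  then show ?thesis
    unfolding binom_prob_def K(2) choose unfolding K(1) by (simp add: power_add algebra_simps)
qed

lemma binom_prob_mirror_less:
  fixes p r :: real
  assumes "0 \<le> r" "r \<le> p" "p \<le> 1" "1/2 < p" "2 \<le> K" "r < 1"
  shows "r * binom_prob K 0 p < (1 - r) * binom_prob K K p"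
  using weighted_pow_less[OF assms] by (simp add: binom_prob_def)

lemma sum_mirror_pairs_le:
  fixes P :: "nat \<Rightarrow> real"
  assumes "\<And>k. k \<le> K \<Longrightarrow> 0 \<le> P k"
  shows "(\<Sum>k\<in>{0..K}. if 2 * k < K then P k + P (K - k) else 0) \<le> (\<Sum>k\<in>{0..K}. P k)"
proof -
  have "(\<Sum>k\<in>{0..K}. if 2 * k < K then P (K - k) else 0)
      = (\<Sum>k\<in>{0..K}. if 2 * (K - k) < K then P (K - (K - k)) else 0)"
    by (rule sum_reflect[symmetric])
  also have "\<dots> = (\<Sum>k\<in>{0..K}. if K < 2 * k then P k else 0)"
    by (intro sum.cong) auto
  finally have reflected: "(\<Sum>k\<in>{0..K}. if 2 * k < K then P (K - k) else 0)
      = (\<Sum>k\<in>{0..K}. if K < 2 * k then P k else 0)" .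
  have "(\<Sum>k\<in>{0..K}. if 2 * k < K then P k + P (K - k) else 0)
      = (\<Sum>k\<in>{0..K}. if 2 * k < K then P k else 0)
        + (\<Sum>k\<in>{0..K}. if 2 * k < K then P (K - k) else 0)"
    by (subst sum.distrib[symmetric]) (intro sum.cong, auto)
  also have "\<dots> = (\<Sum>k\<in>{0..K}. (if 2 * k < K then P k else 0) + (if K < 2 * k then P k else 0))"
    by (simp only: reflected sum.distrib)
  also have "\<dots> \<le> (\<Sum>k\<in>{0..K}. P k)"
    using assms by (intro sum_mono) auto
  finally show ?thesis .
qed

lemma weighted_mirror_gap_gt:
  fixes w :: "nat \<Rightarrow> real" and c p q r :: real
  assumes "1/2 < p" "p \<le> 1" "0 \<le> r" "r \<le> p" "r \<le> q" "r < 1" "2 \<le> K" "0 < c"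
    and w_bounds: "\<And>k. k \<le> K \<Longrightarrow> 0 \<le> w k \<and> w k \<le> c"
    and w_upper_half: "\<And>k. k \<le> K \<Longrightarrow> K \<le> 2 * k \<Longrightarrow> w k = 0"
    and w_zero: "w 0 = c"
  shows "c * (r - q)
    < (\<Sum>k\<in>{0..K}. w k * ((1 - q) * binom_prob K (K - k) p - q * binom_prob K k p))"
proof -
  define P where "P k = binom_prob K k p" for k
  have P_nonneg: "0 \<le> P k" for k
    unfolding P_def using assms(1,2) by (intro binom_prob_nonneg) auto
  have gap_at_r: "0 < (\<Sum>k\<in>{0..K}. w k * ((1 - r) * P (K - k) - r * P k))"
  proof (rule sum_pos2)
    show "0 < w 0 * ((1 - r) * P (K - 0) - r * P 0)"
      unfolding P_def w_zero using assms binom_prob_mirror_less[of r p K] by simp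
    show "0 \<le> w k * ((1 - r) * P (K - k) - r * P k)" if "k \<in> {0..K}" for k
    proof (cases "2 * k < K")
      case True
      then have "r * P k \<le> (1 - r) * P (K - k)"
        unfolding P_def using assms by (intro binom_prob_mirror_le) auto
      then show ?thesis using w_bounds that by simp
    next
      case False
      then show ?thesis using w_upper_half that by simp
    qed
  qed simp_all
  have mass: "(\<Sum>k\<in>{0..K}. w k * (P k + P (K - k))) \<le> c"
  proof -
    have "(\<Sum>k\<in>{0..K}. w k * (P k + P (K - k)))
        \<le> (\<Sum>k\<in>{0..K}. c * (if 2 * k < K then P k + P (K - k) else 0))"
      using w_bounds w_upper_half P_nonneg by (intro sum_mono) (auto intro: mult_right_mono)
    also have "\<dots> \<le> c * (\<Sum>k\<in>{0..K}. P k)"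
      unfolding sum_distrib_left[symmetric] using assms P_nonneg
      by (intro mult_left_mono sum_mirror_pairs_le) auto
    finally show ?thesis unfolding P_def sum_binom_prob by simp
  qed
  have "(\<Sum>k\<in>{0..K}. w k * ((1 - q) * P (K - k) - q * P k))
      = (\<Sum>k\<in>{0..K}. w k * ((1 - r) * P (K - k) - r * P k))
        - (q - r) * (\<Sum>k\<in>{0..K}. w k * (P k + P (K - k)))"
    unfolding sum_distrib_left sum_subtractf[symmetric]
    by (intro sum.cong) (auto simp: algebra_simps)
  also have "\<dots> > - (q - r) * c"
    using gap_at_r mult_left_mono[OF mass, of "q - r"] assms(5) by linarith
  finally show ?thesis unfolding P_def by (simp add: algebra_simps)
qed

lemma mean_share_bounds:
  assumes "strategy K C sigma" "s \<in> {-1, 1}" "k \<le> K"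
  shows "0 \<le> mean_share C sigma s k" "mean_share C sigma s k \<le> C"
proof -
  have nonneg: "\<And>z. z \<in> {0..C} \<Longrightarrow> 0 \<le> sigma s k z"
    and total: "(\<Sum>z\<in>{0..C}. sigma s k z) = 1"
    using assms unfolding strategy_def by auto
  show "0 \<le> mean_share C sigma s k"
    unfolding mean_share_def using nonneg by (intro sum_nonneg) auto
  have "mean_share C sigma s k \<le> (\<Sum>z\<in>{0..C}. real C * sigma s k z)"
    unfolding mean_share_def using nonneg by (intro sum_mono mult_right_mono) auto
  then show "mean_share C sigma s k \<le> C"
    by (simp add: sum_distrib_left[symmetric] total)
qed

lemma mean_share_point_mass:
  assumes "strategy K C sigma" "s \<in> {-1, 1}" "k \<le> K" "z \<le> C" "sigma s k z = 1"
  shows "mean_share C sigma s k = z"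
proof -
  have nonneg: "\<And>z. z \<in> {0..C} \<Longrightarrow> 0 \<le> sigma s k z"
    and total: "(\<Sum>z\<in>{0..C}. sigma s k z) = 1"
    using assms unfolding strategy_def by auto
  have "(\<Sum>y\<in>{0..C} - {z}. sigma s k y) = 0"
    using total assms(4,5) by (simp add: sum.remove)
  then have "\<forall>y\<in>{0..C} - {z}. sigma s k y = 0"
    using nonneg by (subst sum_nonneg_eq_0_iff[symmetric]) auto
  then show ?thesis
    unfolding mean_share_def using assms(4,5) by (simp add: sum.remove)
qed

lemma mean_share_none_seen:
  assumes "strategy K C sigma" "s \<in> {-1, 1}"
  shows "mean_share C sigma s 0 = 0"
proof -
  have "\<forall>z\<in>{0..C}. sigma s 0 z \<noteq> 0 \<longrightarrow> z \<le> 0"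
    using assms unfolding strategy_def by auto
  then show ?thesis
    unfolding mean_share_def by (intro sum.neutral) (metis le_zero_eq mult_eq_0_iff of_nat_0)
qed

lemma mean_share_mirror:
  assumes "strategy K C sigma" "state_symmetric K C sigma" "s \<in> {-1, 1}" "k \<le> K"
  shows "mean_share C sigma s k = C - mean_share C sigma (-s) (K - k)"
proof -
  have "\<forall>k\<in>{0..K}. \<forall>z\<in>{0..C}. sigma s k z = sigma (-s) (K - k) (C - z)"
    using assms(2,3) unfolding state_symmetric_def by (rule bspec)
  then have mirror: "sigma s k z = sigma (-s) (K - k) (C - z)" if "z \<in> {0..C}" for z
    using assms(4) that by simp
  have total: "(\<Sum>z\<in>{0..C}. sigma (-s) (K - k) z) = 1"
    using assms(1,3) unfolding strategy_def by auto
  have "mean_share C sigma s k = (\<Sum>z\<in>{0..C}. real z * sigma (-s) (K - k) (C - z))"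
    unfolding mean_share_def by (intro sum.cong) (simp_all add: mirror)
  also have "\<dots> = (\<Sum>z\<in>{0..C}. real (C - (C - z)) * sigma (-s) (K - k) (C - z))"
    by (intro sum.cong) auto
  also have "\<dots> = (\<Sum>z\<in>{0..C}. real (C - z) * sigma (-s) (K - k) z)"
    by (rule sum_reflect)
  also have "\<dots> = (\<Sum>z\<in>{0..C}. real C * sigma (-s) (K - k) z - real z * sigma (-s) (K - k) z)"
    by (intro sum.cong) (auto simp: of_nat_diff algebra_simps)
  also have "\<dots> = C - mean_share C sigma (-s) (K - k)"
    unfolding mean_share_def sum_subtractf sum_distrib_left[symmetric] total by simp
  finally show ?thesis .
qed

lemma sum_mirror_rearrange:
  fixes a P :: "nat \<Rightarrow> real" and c q :: real
  assumes "(\<Sum>k\<in>{0..K}. P k) = 1"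
  shows "(\<Sum>k\<in>{0..K}. P k * (q * a k + (1 - q) * (c - a (K - k))))
    = c * q + (\<Sum>k\<in>{0..K}. (c - a k) * ((1 - q) * P (K - k) - q * P k))"
proof -
  have reflect: "(\<Sum>k\<in>{0..K}. P k * g (K - k)) = (\<Sum>k\<in>{0..K}. P (K - k) * g k)"
    for g :: "nat \<Rightarrow> real"
  proof -
    have "(\<Sum>k\<in>{0..K}. P k * g (K - k)) = (\<Sum>k\<in>{0..K}. P (K - (K - k)) * g (K - k))"
      by (intro sum.cong) auto
    also have "\<dots> = (\<Sum>k\<in>{0..K}. P (K - k) * g k)"
      by (rule sum_reflect)
    finally show ?thesis .
  qed
  have mass_reflected: "(\<Sum>k\<in>{0..K}. P (K - k)) = 1"
    using assms sum_reflect[of P K] by simp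
  have "(\<Sum>k\<in>{0..K}. P k * (q * a k + (1 - q) * (c - a (K - k))))
      = (\<Sum>k\<in>{0..K}. q * (P k * a k) + ((1 - q) * c) * P k - (1 - q) * (P k * a (K - k)))"
    by (intro sum.cong) (auto simp: algebra_simps)
  also have "\<dots> = q * (\<Sum>k\<in>{0..K}. P k * a k) + (1 - q) * c
      - (1 - q) * (\<Sum>k\<in>{0..K}. P (K - k) * a k)"
    unfolding sum.distrib sum_subtractf sum_distrib_left[symmetric] reflect assms by simp
  also have "\<dots> = c * q + (\<Sum>k\<in>{0..K}. (c * (1 - q)) * P (K - k) - (c * q) * P k
      - (1 - q) * (P (K - k) * a k) + q * (P k * a k))"
    unfolding sum.distrib sum_subtractf sum_distrib_left[symmetric] mass_reflected assms
    by (simp add: algebra_simps)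
  also have "\<dots> = c * q + (\<Sum>k\<in>{0..K}. (c - a k) * ((1 - q) * P (K - k) - q * P k))"
    by (intro arg_cong2[where f = "(+)"] sum.cong) (auto simp: algebra_simps)
  finally show ?thesis .
qed

lemma inflow_accuracy_mirror_form:
  fixes lambda q x :: real
  assumes "strategy K C sigma" "state_symmetric K C sigma"
  defines "p \<equiv> lambda * x + (1 - lambda) * q"
  shows "inflow_accuracy K C q lambda sigma x
    = (q + C * q + (\<Sum>k\<in>{0..K}. (C - mean_share C sigma 1 k)
        * ((1 - q) * binom_prob K (K - k) p - q * binom_prob K k p))) / (1 + real C)"
proof -
  have "mean_share C sigma (-1) k = C - mean_share C sigma 1 (K - k)" if "k \<in> {0..K}" for k
    using mean_share_mirror[OF assms(1,2), of "-1" k] that by simp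
  then have "inflow_accuracy K C q lambda sigma x
    = (q + (\<Sum>k\<in>{0..K}. binom_prob K k p
        * (q * mean_share C sigma 1 k + (1 - q) * (C - mean_share C sigma 1 (K - k))))) / (1 + real C)"
    unfolding inflow_accuracy_def p_def
    by (intro arg_cong2[where f = "(/)"] arg_cong2[where f = "(+)"] sum.cong) simp_all
  also have "\<dots> = (q + C * q + (\<Sum>k\<in>{0..K}. (C - mean_share C sigma 1 k)
        * ((1 - q) * binom_prob K (K - k) p - q * binom_prob K k p))) / (1 + real C)"
    by (simp add: sum_mirror_rearrange[OF sum_binom_prob] add.assoc)
  finally show ?thesis .
qed

theorem lemma4:
  fixes q lambda :: real and K C :: nat and sigma :: "int \<Rightarrow> nat \<Rightarrow> nat \<Rightarrow> real"
  assumes "1/2 < q" "q < 1"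
    and "K \<ge> 1" "C \<ge> 1" "2 * C \<le> K"
    and "0 \<le> lambda" "lambda \<le> 1"
    and "strategy K C sigma"
    and "state_symmetric K C sigma"
    and "\<And>k. k \<le> K \<Longrightarrow> real K / 2 \<le> real k \<Longrightarrow> sigma 1 k C = 1"
  shows "\<not> (\<exists>x\<in>{0..1}. inflow_accuracy K C q lambda sigma x = x
              \<and> lambda * x + (1 - lambda) * q > 1/2 \<and> x \<le> q)"
proof
  assume "\<exists>x\<in>{0..1}. inflow_accuracy K C q lambda sigma x = x
              \<and> lambda * x + (1 - lambda) * q > 1/2 \<and> x \<le> q"
  then obtain x where x: "0 \<le> x" "x \<le> 1" "x \<le> q"
    and fixed: "inflow_accuracy K C q lambda sigma x = x"
    and above_half: "1/2 < lambda * x + (1 - lambda) * q" by auto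
  define p where "p = lambda * x + (1 - lambda) * q"
  have "x \<le> p" "p \<le> 1"
    using x assms(2,6,7) mult_left_mono[of x q "1 - lambda"]
      convex_bound_le[of x 1 q lambda "1 - lambda"]
    unfolding p_def by (auto simp: algebra_simps)
  define w where "w k = C - mean_share C sigma 1 k" for k
  have "C * (x - q)
      < (\<Sum>k\<in>{0..K}. w k * ((1 - q) * binom_prob K (K - k) p - q * binom_prob K k p))"
  proof (rule weighted_mirror_gap_gt)
    show "w k = 0" if "k \<le> K" "K \<le> 2 * k" for k
    proof -
      have "sigma 1 k C = 1" using that assms(10) by simp
      then show ?thesis
        unfolding w_def using that mean_share_point_mass[OF assms(8), of 1 k C] by simp
    qed
    show "0 \<le> w k \<and> w k \<le> C" if "k \<le> K" for k
      unfolding w_def using that mean_share_bounds[OF assms(8), of 1 k] by simp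
    show "w 0 = C"
      unfolding w_def using assms(8) by (simp add: mean_share_none_seen)
  qed (use x above_half \<open>x \<le> p\<close> \<open>p \<le> 1\<close> assms(2,4,5) in \<open>auto simp: p_def\<close>)
  moreover have "(1 + C) * x = q + C * q
      + (\<Sum>k\<in>{0..K}. w k * ((1 - q) * binom_prob K (K - k) p - q * binom_prob K k p))"
    using fixed inflow_accuracy_mirror_form[OF assms(8,9), where lambda = lambda and q = q and x = x]
    unfolding w_def p_def[symmetric] by (simp add: field_simps)
  ultimately show False
    using x(3) by (simp add: algebra_simps)
qed

end
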